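(* Setting and construction as in the context. Assume that for every $t\in[0,T]$ the set $\mathbb{W}(t)=B(t)\mathbb{U}\ominus(-E(t)\mathbb{D})$ is nonempty. Let $g\in C(\mathbb{R}^n;\mathbb{R})$, $L_g\ge 0$, $N\in\mathbb{N}$, levels $\gamma_1,\dots,\gamma_N\in g(\mathbb{R}^n)$, integers $n_k\in\mathbb{N}$, points $\bar x_{i,k}\in g^{-1}(\{\gamma_k\})$ ($1\le i\le n_k$), and controls $\omega_{i,k}\in\mathscr{W}[0,T]$ be given, and let $$\bar v(t,x)=\min_{k\in\{1,\dots,N\}}\Big(L_g\inf_{\xi\in\Omega^\star_k(t)}\|\Phi_A(T,t)(x-\xi)\|+\gamma_k\Big),\qquad \Omega^\star_k(t)=\mathrm{conv}\big(\{\xi^\star_{i,k}(t)\}_{i=1}^{n_k}\big),$$ where $\xi^\star_{i,k}$ is the solution on $[0,T]$ of $\dot\xi(s)=A(s)\xi(s)+\omega_{i,k}(s)$ a.e., $\xi(T)=\bar x_{i,k}$. Then $\bar v$ is a continuous viscosity supersolution of $-v_t(t,x)+H(t,x,\nabla v(t,x))=0$ on $(0,T)\times\mathbb{R}^n$, where $H(t,x,p)=\max_{u\in\mathbb{U}}\min_{d\in\mathbb{D}}\langle -p,A(t)x+B(t)u+E(t)d\rangle$.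
   Context: Fix $T>0$ and integers $n,m,\ell\ge 1$. Let $A\in C([0,T];\mathbb{R}^{n\times n})$, $B\in C([0,T];\mathbb{R}^{n\times m})$, $E\in C([0,T];\mathbb{R}^{n\times \ell})$, and let $\mathbb{U}\subset\mathbb{R}^m$, $\mathbb{D}\subset\mathbb{R}^\ell$ be compact, convex and nonempty. $\Phi_A(s,\tau)$ denotes the state-transition matrix of $\dot y(s)=A(s)y(s)$. For sets $Y,Z\subseteq\mathbb{R}^n$: $Y\oplus Z=\{y+z: y\in Y,z\in Z\}$, $Y\ominus Z=\{c\in\mathbb{R}^n:\{c\}\oplus Z\subseteq Y\}$, and for a matrix $P$, $PY=\{Py:y\in Y\}$. For $0\le t\le T$, $\mathscr{W}[t,T]$ is the set of measurable $\omega:[t,T]\to\mathbb{R}^n$ with $\omega(s)\in\mathbb{W}(s)$ for all $s\in[t,T]$. For $(t_0,x_0)\in(0,T)\times\mathbb{R}^n$ and continuous $f$ on $[0,T]\times\mathbb{R}^n$, the subdifferential $D^-f(t_0,x_0)$ (resp. superdifferential $D^+f(t_0,x_0)$) is the set of $(q,p)\in\mathbb{R}\times\mathbb{R}^n$ with $\liminf_{(t,x)\to(t_0,x_0)}\frac{f(t,x)-f(t_0,x_0)-\langle (q,p),(t,x)-(t_0,x_0)\rangle}{\|(t,x)-(t_0,x_0)\|}\ge 0$ (resp. $\limsup\ldots\le 0$). A continuous $f$ is a viscosity supersolution (resp. subsolution) of $-v_t+H(t,x,\nabla v)=0$ on $(0,T)\times\mathbb{R}^n$ if for all $(t_0,x_0)\in(0,T)\times\mathbb{R}^n$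 and all $(q,p)\in D^-f(t_0,x_0)$ (resp. $D^+f(t_0,x_0)$), $-q+H(t_0,x_0,p)\ge 0$ (resp. $\le 0$); it is a viscosity solution if it is both. *)

theory Defs
  imports "HOL-Analysis.Analysis"
begin

definition mink_diff :: "'a::ab_group_add set \<Rightarrow> 'a set \<Rightarrow> 'a set" where
  "mink_diff Y Z = {c. (\<lambda>z. c + z) ` Z \<subseteq> Y}"

definition Wset :: "(real \<Rightarrow> real^'m^'n) \<Rightarrow> (real \<Rightarrow> real^'l^'n) \<Rightarrow> (real^'m) set
    \<Rightarrow> (real^'l) set \<Rightarrow> real \<Rightarrow> (real^'n) set" where
  "Wset B E U D t = mink_diff ((\<lambda>u. B t *v u) ` U) ((\<lambda>d. - (E t *v d)) ` D)"

definition admissible :: "(real \<Rightarrow> (real^'n) set) \<Rightarrow> real \<Rightarrow> real \<Rightarrow> (real \<Rightarrow> real^'n) \<Rightarrow> bool" where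
  "admissible W t T \<omega> \<longleftrightarrow> \<omega> measurable_on {t..T} \<and> (\<forall>s\<in>{t..T}. \<omega> s \<in> W s)"

definition state_transition :: "(real \<Rightarrow> real^'n^'n) \<Rightarrow> real \<Rightarrow> (real \<Rightarrow> real \<Rightarrow> real^'n^'n) \<Rightarrow> bool" where
  "state_transition A T Phi \<longleftrightarrow>
     (\<forall>\<tau>\<in>{0..T}. Phi \<tau> \<tau> = mat 1 \<and>
        (\<forall>s\<in>{0..T}. ((\<lambda>s. Phi s \<tau>) has_vector_derivative (A s ** Phi s \<tau>)) (at s within {0..T})))"

definition hamiltonian :: "(real \<Rightarrow> real^'n^'n) \<Rightarrow> (real \<Rightarrow> real^'m^'n) \<Rightarrow> (real \<Rightarrow> real^'l^'n)
    \<Rightarrow> (real^'m) set \<Rightarrow> (real^'l) set \<Rightarrow> real \<Rightarrow> real^'n \<Rightarrow> real^'n \<Rightarrow> real" where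
  "hamiltonian A B E U D t x p =
     (SUP u\<in>U. INF d\<in>D. (- p) \<bullet> (A t *v x + B t *v u + E t *v d))"

text \<open>Subdifferential D^- f(t0,x0): liminf of the difference quotient is >= 0 (written out).\<close>
definition subdiff :: "(real \<Rightarrow> 'a::real_inner \<Rightarrow> real) \<Rightarrow> real \<Rightarrow> 'a \<Rightarrow> (real \<times> 'a) set" where
  "subdiff f t0 x0 = {(q, p). \<forall>\<epsilon>>0. \<exists>\<delta>>0. \<forall>t x.
      0 < norm ((t, x) - (t0, x0)) \<and> norm ((t, x) - (t0, x0)) < \<delta> \<longrightarrow>
      f t x - f t0 x0 - (q * (t - t0) + p \<bullet> (x - x0)) \<ge> - \<epsilon> * norm ((t, x) - (t0, x0))}"

definition visc_supersolution :: "real \<Rightarrow> (real \<Rightarrow> 'a::real_inner \<Rightarrow> 'a \<Rightarrow> real) \<Rightarrow> (real \<Rightarrow> 'a \<Rightarrow> real) \<Rightarrow> bool" where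
  "visc_supersolution T H f \<longleftrightarrow>
     (\<forall>t0 x0 q p. 0 < t0 \<and> t0 < T \<and> (q, p) \<in> subdiff f t0 x0 \<longrightarrow> - q + H t0 x0 p \<ge> 0)"

end

theory Submission
  imports Defs
begin

text \<open>
  Every term \<open>Lg * dist_k + \<gamma> k\<close> of the minimum is continuous, because the state-transition
  matrix \<open>Phi T t\<close> and the reference trajectories \<open>\<xi> i k t\<close> depend continuously on \<open>t\<close>.

  For the supersolution property at \<open>(t0, x0)\<close>, pick an index \<open>k\<close> attaining the minimum and a
  point \<open>y0 = \<Sum>i. u i *\<^sub>R \<xi> i k t0\<close> of the convex hull nearest to \<open>x0\<close> in the metric of
  \<open>Phi T t0\<close>. Then \<open>x s = (\<Sum>i. u i *\<^sub>R \<xi> i k s) + Phi s t0 *v (x0 - y0)\<close> solves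
  \<open>x' = A x + w\<close> with the convexified control \<open>w = \<Sum>i. u i *\<^sub>R \<omega> i k\<close>, which still takes
  values in the convex sets \<open>W s\<close>, and \<open>Phi T s *v (x s - y s)\<close> stays constant, so \<open>v\<close> does not
  increase along \<open>x\<close>. Testing a subgradient \<open>(q, p)\<close> along \<open>x\<close> gives
  \<open>q \<le> -p \<bullet> (A x0 + w s) + o(1)\<close> for \<open>s \<down> t0\<close>. Finally every \<open>w \<in> W s\<close> satisfies
  \<open>-p \<bullet> w \<le> max\<^sub>u min\<^sub>d -p \<bullet> (B s u + E s d)\<close> (play \<open>u\<close> against the worst \<open>d\<close>), and continuity
  of \<open>B\<close> and \<open>E\<close> turns this into \<open>q \<le> H(t0, x0, p)\<close>.
\<close>

section \<open>Linear matrix ODEs and the state-transition matrix\<close>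

lemma norm_matrix_vector_mult_le: "norm ((M::real^'n^'m) *v x) \<le> norm M * norm x"
proof -
  have "(norm (M *v x))\<^sup>2 = (\<Sum>i\<in>UNIV. (M$i \<bullet> x)\<^sup>2)"
    by (simp add: norm_vec_def L2_set_def sum_nonneg matrix_vector_mult_def inner_vec_def mult.commute)
  also have "\<dots> \<le> (\<Sum>i\<in>UNIV. (norm (M$i))\<^sup>2 * (norm x)\<^sup>2)"
    by (intro sum_mono) (metis Cauchy_Schwarz_ineq2 abs_ge_zero power2_abs power_mono power_mult_distrib)
  also have "\<dots> = (norm M * norm x)\<^sup>2"
    by (simp add: norm_vec_def L2_set_def sum_nonneg power_mult_distrib sum_distrib_right)
  finally show ?thesis
    by (meson mult_nonneg_nonneg norm_ge_zero power2_le_imp_le)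
qed

lemma bounded_bilinear_matrix_vector_mult [bounded_bilinear]:
  "bounded_bilinear (\<lambda>(M::real^'n^'m) x. M *v x)"
proof
  show "\<exists>K. \<forall>(M::real^'n^'m) x. norm (M *v x) \<le> norm M * norm x * K"
    using norm_matrix_vector_mult_le by (metis mult.right_neutral)
qed (simp_all add: algebra_simps matrix_vector_mult_def vec_eq_iff sum_distrib_left sum.distrib)

lemma bilinear_matrix_mult: "bilinear ((**) :: real^'n^'m \<Rightarrow> real^'k^'n \<Rightarrow> _)"
  by (auto simp: bilinear_def matrix_matrix_mult_def vec_eq_iff algebra_simps sum.distrib sum_distrib_left
      intro!: linearI)

lemma bounded_bilinear_matrix_mult [bounded_bilinear]:
  "bounded_bilinear ((**) :: real^'n^'m \<Rightarrow> real^'k^'n \<Rightarrow> _)"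
  using bilinear_matrix_mult bilinear_conv_bounded_bilinear by blast

lemma linear_growth_zero_near:
  fixes Z :: "real \<Rightarrow> 'a::real_normed_vector"
  assumes Z': "\<And>s. s \<in> {a..b} \<Longrightarrow> (Z has_vector_derivative Z' s) (at s within {a..b})"
    and growth: "\<And>s. s \<in> {a..b} \<Longrightarrow> norm (Z' s) \<le> L * norm (Z s)" and L: "L > 0"
    and s0: "s0 \<in> {a..b}" "Z s0 = 0" and r: "r \<in> {a..b}" "dist r s0 \<le> 1 / (2 * L)"
  shows "Z r = 0"
proof -
  define J where "J = {a..b} \<inter> cball s0 (1 / (2 * L))"
  have J: "compact J" "convex J" "s0 \<in> J" "r \<in> J" "J \<subseteq> {a..b}"
    using s0 r L by (auto simp: J_def dist_commute compact_Int_closed convex_Int)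
  have "continuous_on J Z"
    using Z' J(5) by (meson continuous_on_eq_continuous_within has_vector_derivative_continuous
        has_vector_derivative_within_subset subsetD)
  then obtain s1 where s1: "s1 \<in> J" "\<And>r'. r' \<in> J \<Longrightarrow> norm (Z r') \<le> norm (Z s1)"
    using continuous_attains_sup[OF J(1) _ continuous_on_norm] J(3) by blast
  \<comment> \<open>On \<open>J\<close> we get \<open>|Z| \<le> L * max |Z| * 1 / (2 * L)\<close>, which forces \<open>max |Z| = 0\<close>.\<close>
  have "norm (Z r' - Z s0) \<le> L * norm (Z s1) * norm (r' - s0)" if "r' \<in> J" for r'
  proof (rule differentiable_bound[OF J(2) _ _ that J(3)])
    show "(Z has_derivative (\<lambda>h. h *\<^sub>R Z' x)) (at x within J)" if "x \<in> J" for x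
      using Z'[of x] that J(5) has_vector_derivative_within_subset
      unfolding has_vector_derivative_def by blast
    show "onorm (\<lambda>h. h *\<^sub>R Z' x) \<le> L * norm (Z s1)" if "x \<in> J" for x
      using onorm_scaleR_left[OF bounded_linear_ident, of "Z' x"] onorm_id[where 'a=real]
        order_trans[OF growth mult_left_mono[OF s1(2)]] that J(5) L by auto
  qed
  then have "norm (Z r') \<le> norm (Z s1) / 2" if "r' \<in> J" for r'
    using that order_trans[OF _ mult_left_mono[of "norm (r' - s0)" "1 / (2 * L)"]] s0(2) L
    by (fastforce simp: J_def dist_norm norm_minus_commute)
  then have "norm (Z s1) = 0"
    using s1(1) by fastforce
  then show ?thesis
    using s1(2)[OF J(4)] by simp
qed

lemma linear_growth_zero_unique:
  fixes Z :: "real \<Rightarrow> 'a::real_normed_vector"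
  assumes Z': "\<And>s. s \<in> {a..b} \<Longrightarrow> (Z has_vector_derivative Z' s) (at s within {a..b})"
    and growth: "\<And>s. s \<in> {a..b} \<Longrightarrow> norm (Z' s) \<le> L * norm (Z s)" and L: "L > 0"
    and \<sigma>: "\<sigma> \<in> {a..b}" "Z \<sigma> = 0" and s: "s \<in> {a..b}"
  shows "Z s = 0"
proof -
  let ?Z0 = "{r \<in> {a..b}. Z r = 0}"
  have "openin (top_of_set {a..b}) ?Z0"
    unfolding openin_euclidean_subtopology_iff
  proof (intro conjI ballI)
    fix s0 assume "s0 \<in> ?Z0"
    then have "r \<in> ?Z0" if "r \<in> {a..b}" "dist r s0 < 1 / (2 * L)" for r
      using linear_growth_zero_near[OF Z' growth L, of s0 r] that by simp
    then show "\<exists>e>0. \<forall>r\<in>{a..b}. dist r s0 < e \<longrightarrow> r \<in> ?Z0"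
      using L by (intro exI[of _ "1 / (2 * L)"]) auto
  qed blast
  moreover have "closedin (top_of_set {a..b}) ?Z0"
    using Z' by (intro continuous_closedin_preimage_constant)
      (meson continuous_on_eq_continuous_within has_vector_derivative_continuous)
  ultimately have "?Z0 = {} \<or> ?Z0 = {a..b}"
    using connected_clopen[THEN iffD1, OF connected_Icc[of a b]] by blast
  then show ?thesis
    using s \<sigma> by blast
qed

lemma state_transition_cocycle:
  fixes A :: "real \<Rightarrow> real^'n^'n" and Phi :: "real \<Rightarrow> real \<Rightarrow> real^'n^'n"
  assumes A: "continuous_on {0..T} A" and Phi: "state_transition A T Phi"
    and s: "s \<in> {0..T}" and \<sigma>: "\<sigma> \<in> {0..T}" and \<tau>: "\<tau> \<in> {0..T}"
  shows "Phi s \<sigma> ** Phi \<sigma> \<tau> = Phi s \<tau>"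
proof -
  obtain K where K: "K > 0" "\<And>(P::real^'n^'n) (Y::real^'n^'n). norm (P ** Y) \<le> norm P * norm Y * K"
    using bounded_bilinear.pos_bounded[OF bounded_bilinear_matrix_mult] by blast
  obtain M where M: "M > 0" "\<And>r. r \<in> {0..T} \<Longrightarrow> norm (A r) \<le> M"
    using compact_imp_bounded[OF compact_continuous_image[OF A compact_Icc]]
    unfolding bounded_pos by auto
  have "Phi r \<sigma> ** Phi \<sigma> \<tau> - Phi r \<tau> = 0" if "r \<in> {0..T}" for r
  proof (rule linear_growth_zero_unique[of 0 T _ _ "M * K", OF _ _ _ \<sigma> _ that])
    fix r assume r: "r \<in> {0..T}"
    let ?Y = "Phi r \<sigma> ** Phi \<sigma> \<tau> - Phi r \<tau>"
    have "norm (A r ** ?Y) \<le> norm (A r) * norm ?Y * K"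
      by (rule K(2))
    also have "\<dots> \<le> M * norm ?Y * K"
      using M(2)[OF r] K(1) by (intro mult_right_mono) auto
    finally show "norm (A r ** ?Y) \<le> M * K * norm ?Y"
      by (simp add: ac_simps)
    have "((\<lambda>r. Phi r \<sigma> ** Phi \<sigma> \<tau> - Phi r \<tau>) has_vector_derivative
        (A r ** Phi r \<sigma>) ** Phi \<sigma> \<tau> - A r ** Phi r \<tau>) (at r within {0..T})"
      using Phi \<sigma> \<tau> r unfolding state_transition_def
      by (intro has_vector_derivative_diff bounded_linear.has_vector_derivative[OF
            bounded_bilinear.bounded_linear_left[OF bounded_bilinear_matrix_mult]]) auto
    then show "((\<lambda>r. Phi r \<sigma> ** Phi \<sigma> \<tau> - Phi r \<tau>) has_vector_derivative
        A r ** (Phi r \<sigma> ** Phi \<sigma> \<tau> - Phi r \<tau>)) (at r within {0..T})"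
      by (simp add: bilinear_rsub[OF bilinear_matrix_mult] matrix_mul_assoc)
  qed (use Phi \<sigma> \<tau> M K in \<open>simp_all add: state_transition_def\<close>)
  then show ?thesis
    using s by simp
qed

lemma tendsto_matrix_mult_cancel_right:
  fixes P :: "'a \<Rightarrow> real^'n^'m" and Q :: "'a \<Rightarrow> real^'n^'n"
  assumes Q: "(Q \<longlongrightarrow> mat 1) F" and PQ: "eventually (\<lambda>t. P t ** Q t = P0) F"
  shows "(P \<longlongrightarrow> P0) F"
proof -
  obtain K where K: "K > 0" "\<And>(X::real^'n^'m) (Y::real^'n^'n). norm (X ** Y) \<le> norm X * norm Y * K"
    using bounded_bilinear.pos_bounded[OF bounded_bilinear_matrix_mult] by blast
  have Q0: "((\<lambda>t. norm (Q t - mat 1)) \<longlongrightarrow> 0) F"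
    using tendsto_norm[OF Q[THEN LIM_zero_iff[THEN iffD2]]] by simp
  have small: "eventually (\<lambda>t. K * norm (Q t - mat 1) < 1 / 2) F"
    by (rule order_tendstoD(2)[OF tendsto_mult_right_zero[OF Q0]]) simp
  have bound: "norm (P t - P0) \<le> 2 * norm P0 * K * norm (Q t - mat 1)"
    if PQt: "P t ** Q t = P0" and smallt: "K * norm (Q t - mat 1) < 1 / 2" for t
  proof -
    have diff: "P t - P0 = - (P t ** (Q t - mat 1))"
      using PQt by (simp add: bilinear_rsub[OF bilinear_matrix_mult])
    have "norm (P t) \<le> norm P0 + norm (P t - P0)"
      by (rule norm_triangle_sub)
    also have "norm (P t - P0) \<le> norm (P t) * (K * norm (Q t - mat 1))"
      using diff K(2)[of "P t" "Q t - mat 1"] by (simp add: ac_simps)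
    also have "\<dots> \<le> norm (P t) * (1 / 2)"
      using smallt by (intro mult_left_mono) auto
    finally have "norm (P t) \<le> 2 * norm P0"
      by simp
    have "norm (P t - P0) \<le> norm (P t) * norm (Q t - mat 1) * K"
      using diff K(2)[of "P t" "Q t - mat 1"] by simp
    also have "\<dots> \<le> (2 * norm P0) * norm (Q t - mat 1) * K"
      using \<open>norm (P t) \<le> 2 * norm P0\<close> K(1) by (intro mult_right_mono) auto
    finally show ?thesis
      by (simp add: ac_simps)
  qed
  have "eventually (\<lambda>t. norm (P t - P0) \<le> 2 * norm P0 * K * norm (Q t - mat 1)) F"
    using eventually_conj[OF PQ small] by (rule eventually_mono) (use bound in blast)
  then have "((\<lambda>t. P t - P0) \<longlongrightarrow> 0) F"
    by (rule Lim_null_comparison[OF _ tendsto_mult_right_zero[OF Q0]])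
  then show ?thesis
    by (simp add: LIM_zero_iff)
qed

lemma continuous_on_state_transition_initial:
  assumes A: "continuous_on {0..T} A" and Phi: "state_transition A T Phi" and s: "s \<in> {0..T}"
  shows "continuous_on {0..T} (Phi s)"
  unfolding continuous_on_def
proof
  fix t0 assume t0: "t0 \<in> {0..T}"
  show "(Phi s \<longlongrightarrow> Phi s t0) (at t0 within {0..T})"
  proof (rule tendsto_matrix_mult_cancel_right)
    have "continuous (at t0 within {0..T}) (\<lambda>t. Phi t t0)"
      using Phi t0 unfolding state_transition_def by (blast intro: has_vector_derivative_continuous)
    then show "((\<lambda>t. Phi t t0) \<longlongrightarrow> mat 1) (at t0 within {0..T})"
      using Phi t0 unfolding continuous_within state_transition_def by simp
    show "eventually (\<lambda>t. Phi s t ** Phi t t0 = Phi s t0) (at t0 within {0..T})"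
      using state_transition_cocycle[OF A Phi s _ t0]
      by (auto simp: eventually_at_filter intro!: always_eventually)
  qed
qed

section \<open>Solutions in integral form\<close>

definition integral_solution ::
    "(real \<Rightarrow> real^'n^'n) \<Rightarrow> (real \<Rightarrow> real^'n) \<Rightarrow> (real \<Rightarrow> real^'n) \<Rightarrow> real \<Rightarrow> real \<Rightarrow> bool" where
  "integral_solution A w x a b \<longleftrightarrow>
     (\<forall>s\<in>{a..b}. ((\<lambda>r. A r *v x r + w r) has_integral (x s - x a)) {a..s})"

lemma integral_solution_of_terminal_value:
  assumes x: "\<forall>t\<in>{a..b}. ((\<lambda>r. A r *v x r + w r) has_integral (xT - x t)) {t..b}"
    and c: "a \<le> c"
  shows "integral_solution A w x c b"
  unfolding integral_solution_def
proof
  fix s assume s: "s \<in> {c..b}"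
  let ?f = "\<lambda>r. A r *v x r + w r"
  have Fc: "(?f has_integral (xT - x c)) {c..b}" and Fs: "(?f has_integral (xT - x s)) {s..b}"
    using x c s by auto
  have "?f integrable_on {c..s}"
    using integrable_subinterval_real[OF has_integral_integrable[OF Fc]] s by auto
  then obtain i where i: "(?f has_integral i) {c..s}"
    by blast
  have "(?f has_integral (i + (xT - x s))) {c..b}"
    using has_integral_combine[OF _ _ i Fs] s by auto
  then have "i + (xT - x s) = xT - x c"
    using Fc by (rule has_integral_unique)
  then have "i = x s - x c"
    by (simp add: algebra_simps)
  then show "(?f has_integral (x s - x c)) {c..s}"
    using i by simp
qed

lemma integral_solution_continuous:
  assumes "integral_solution A w x a b"
  shows "continuous_on {a..b} x"
proof (cases "a \<le> b")
  case True
  let ?f = "\<lambda>r. A r *v x r + w r"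
  have "?f integrable_on {a..b}"
    using assms True unfolding integral_solution_def by auto
  then have cont: "continuous_on {a..b} (\<lambda>s. x a + integral {a..s} ?f)"
    by (intro continuous_intros indefinite_integral_continuous_1)
  have "x a + integral {a..s} ?f = x s" if "s \<in> {a..b}" for s
  proof -
    have "(?f has_integral (x s - x a)) {a..s}"
      using assms that unfolding integral_solution_def by blast
    then show ?thesis
      by (simp add: integral_unique)
  qed
  then show ?thesis
    using continuous_on_eq[OF cont] by blast
qed simp

lemma integral_solution_sum:
  assumes "finite I" and "\<forall>i\<in>I. integral_solution A (w i) (x i) a b"
  shows "integral_solution A (\<lambda>r. \<Sum>i\<in>I. c i *\<^sub>R w i r) (\<lambda>r. \<Sum>i\<in>I. c i *\<^sub>R x i r) a b"
  unfolding integral_solution_def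
proof
  fix s assume s: "s \<in> {a..b}"
  have "((\<lambda>r. \<Sum>i\<in>I. c i *\<^sub>R (A r *v x i r + w i r)) has_integral
      (\<Sum>i\<in>I. c i *\<^sub>R (x i s - x i a))) {a..s}"
    using assms s unfolding integral_solution_def by (intro has_integral_sum has_integral_cmul) auto
  moreover have "(\<Sum>i\<in>I. c i *\<^sub>R (A r *v x i r + w i r))
      = A r *v (\<Sum>i\<in>I. c i *\<^sub>R x i r) + (\<Sum>i\<in>I. c i *\<^sub>R w i r)" for r
  proof -
    have l: "linear ((*v) (A r))"
      by simp
    show ?thesis
      unfolding scaleR_add_right sum.distrib linear_sum[OF l] linear_scale[OF l] ..
  qed
  ultimately show "((\<lambda>r. A r *v (\<Sum>i\<in>I. c i *\<^sub>R x i r) + (\<Sum>i\<in>I. c i *\<^sub>R w i r)) has_integral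
      (\<Sum>i\<in>I. c i *\<^sub>R x i s) - (\<Sum>i\<in>I. c i *\<^sub>R x i a)) {a..s}"
    by (simp add: scaleR_diff_right sum_subtractf)
qed

lemma integral_solution_add_homogeneous:
  assumes "integral_solution A w x a b" and "integral_solution A (\<lambda>_. 0) z a b"
  shows "integral_solution A w (\<lambda>r. x r + z r) a b"
  unfolding integral_solution_def
proof
  fix s assume s: "s \<in> {a..b}"
  have "((\<lambda>r. (A r *v x r + w r) + (A r *v z r + 0)) has_integral (x s - x a) + (z s - z a)) {a..s}"
    using assms s unfolding integral_solution_def by (intro has_integral_add) auto
  then show "((\<lambda>r. A r *v (x r + z r) + w r) has_integral x s + z s - (x a + z a)) {a..s}"
    by (simp add: matrix_vector_right_distrib algebra_simps)
qed

lemma integral_solution_state_transition: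
  assumes Phi: "state_transition A T Phi" and t0: "t0 \<in> {0..T}"
  shows "integral_solution A (\<lambda>_. 0) (\<lambda>s. Phi s t0 *v c) t0 T"
  unfolding integral_solution_def
proof
  fix s assume s: "s \<in> {t0..T}"
  have "((\<lambda>r. Phi r t0 *v c) has_vector_derivative A r *v (Phi r t0 *v c)) (at r within {t0..s})"
    if "r \<in> {t0..s}" for r
  proof -
    have "r \<in> {0..T}" "{t0..s} \<subseteq> {0..T}"
      using t0 s that by auto
    then have "((\<lambda>r. Phi r t0) has_vector_derivative A r ** Phi r t0) (at r within {t0..s})"
      using Phi t0 unfolding state_transition_def by (blast intro: has_vector_derivative_within_subset)
    then show ?thesis
      using bounded_linear.has_vector_derivative[OF
          bounded_bilinear.bounded_linear_left[OF bounded_bilinear_matrix_vector_mult]]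
      by (fastforce simp: matrix_vector_mul_assoc)
  qed
  then have "((\<lambda>r. A r *v (Phi r t0 *v c)) has_integral Phi s t0 *v c - Phi t0 t0 *v c) {t0..s}"
    using s by (intro fundamental_theorem_of_calculus) auto
  then show "((\<lambda>r. A r *v (Phi r t0 *v c) + 0) has_integral Phi s t0 *v c - Phi t0 t0 *v c) {t0..s}"
    by simp
qed

section \<open>Distance to a moving convex hull\<close>

lemma convex_hull_finite_imageE:
  fixes f :: "'i \<Rightarrow> 'a::real_vector"
  assumes I: "finite I" and y: "y \<in> convex hull (f ` I)"
  obtains u where "\<forall>i\<in>I. 0 \<le> u i" "sum u I = 1" "y = (\<Sum>i\<in>I. u i *\<^sub>R f i)"
proof -
  obtain c where c: "\<forall>z\<in>f ` I. 0 \<le> c z" "sum c (f ` I) = 1" "(\<Sum>z\<in>f ` I. c z *\<^sub>R z) = y"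
    using y convex_hull_finite[of "f ` I"] I by auto
  \<comment> \<open>Put the weight of each point on one chosen preimage.\<close>
  define g where "g = inv_into I f"
  define u where "u i = (if i \<in> g ` f ` I then c (f i) else 0)" for i
  have g: "inj_on g (f ` I)" "g ` f ` I \<subseteq> I" "\<And>z. z \<in> f ` I \<Longrightarrow> f (g z) = z"
    by (auto simp: g_def inj_on_inv_into inv_into_into f_inv_into_f)
  have "(\<Sum>i\<in>I. u i *\<^sub>R f i) = (\<Sum>i\<in>g ` f ` I. c (f i) *\<^sub>R f i)"
    using g I by (intro sum.mono_neutral_cong_right) (auto simp: u_def)
  also have "\<dots> = y"
    using g c by (simp add: sum.reindex)
  finally have "y = (\<Sum>i\<in>I. u i *\<^sub>R f i)" ..
  have "sum u I = (\<Sum>i\<in>g ` f ` I. c (f i))"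
    using g I by (intro sum.mono_neutral_cong_right) (auto simp: u_def)
  also have "\<dots> = 1"
    using g c by (simp add: sum.reindex)
  finally show ?thesis
    using that[of u] c \<open>y = _\<close> by (auto simp: u_def)
qed

lemma infdist_convex_hull_image_le:
  fixes b b' :: "'i \<Rightarrow> 'a::real_normed_vector"
  assumes I: "finite I" "I \<noteq> {}"
  shows "infdist x (convex hull (b ` I)) \<le> infdist x (convex hull (b' ` I)) + (\<Sum>i\<in>I. dist (b i) (b' i))"
proof -
  have "infdist x (convex hull (b ` I)) - (\<Sum>i\<in>I. dist (b i) (b' i)) \<le> dist x y'"
    if y': "y' \<in> convex hull (b' ` I)" for y'
  proof -
    obtain u where u: "\<forall>i\<in>I. 0 \<le> u i" "sum u I = 1" "y' = (\<Sum>i\<in>I. u i *\<^sub>R b' i)"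
      using convex_hull_finite_imageE[OF I(1) y'] by blast
    have u_le: "u i \<le> 1" if "i \<in> I" for i
      using member_le_sum[of i I u] u(1,2) I(1) that by auto
    define y where "y = (\<Sum>i\<in>I. u i *\<^sub>R b i)"
    have "y \<in> convex hull (b ` I)"
      unfolding y_def using u I by (intro convex_sum) (auto intro: hull_inc)
    then have "infdist x (convex hull (b ` I)) \<le> dist x y' + dist y y'"
      using infdist_le dist_triangle2 order_trans by blast
    moreover have "dist y y' \<le> (\<Sum>i\<in>I. dist (b i) (b' i))"
    proof -
      have "dist y y' = norm (\<Sum>i\<in>I. u i *\<^sub>R (b i - b' i))"
        by (simp add: y_def u(3) dist_norm scaleR_diff_right sum_subtractf)
      also have "\<dots> \<le> (\<Sum>i\<in>I. u i * dist (b i) (b' i))"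
        using u(1) by (auto intro!: order_trans[OF norm_sum] sum_mono simp: dist_norm)
      also have "\<dots> \<le> (\<Sum>i\<in>I. dist (b i) (b' i))"
        using u(1) u_le by (intro sum_mono mult_left_le_one_le) auto
      finally show ?thesis .
    qed
    ultimately show ?thesis
      by simp
  qed
  then have "infdist x (convex hull (b ` I)) - (\<Sum>i\<in>I. dist (b i) (b' i))
      \<le> infdist x (convex hull (b' ` I))"
    using I by (simp add: infdist_notempty cINF_greatest)
  then show ?thesis
    by simp
qed

lemma continuous_on_infdist_convex_hull_image:
  fixes a :: "'b::topological_space \<Rightarrow> 'a::real_normed_vector" and b :: "'i \<Rightarrow> 'b \<Rightarrow> 'a"
  assumes I: "finite I" "I \<noteq> {}" and a: "continuous_on S a" and b: "\<forall>i\<in>I. continuous_on S (b i)"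
  shows "continuous_on S (\<lambda>z. infdist (a z) (convex hull ((\<lambda>i. b i z) ` I)))"
  unfolding continuous_on_def
proof
  fix z0 assume z0: "z0 \<in> S"
  let ?h = "\<lambda>z. infdist (a z) (convex hull ((\<lambda>i. b i z) ` I))"
  let ?g = "\<lambda>z. dist (a z) (a z0) + (\<Sum>i\<in>I. dist (b i z) (b i z0))"
  have bound: "dist (?h z) (?h z0) \<le> ?g z" for z
  proof -
    have "?h z \<le> infdist (a z) (convex hull ((\<lambda>i. b i z0) ` I)) + (\<Sum>i\<in>I. dist (b i z) (b i z0))"
      by (rule infdist_convex_hull_image_le[OF I])
    moreover have "?h z0 \<le> infdist (a z0) (convex hull ((\<lambda>i. b i z) ` I)) + (\<Sum>i\<in>I. dist (b i z0) (b i z))"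
      by (rule infdist_convex_hull_image_le[OF I])
    moreover have "infdist (a z) (convex hull ((\<lambda>i. b i z0) ` I)) \<le> ?h z0 + dist (a z) (a z0)"
      and "infdist (a z0) (convex hull ((\<lambda>i. b i z) ` I)) \<le> ?h z + dist (a z0) (a z)"
      by (rule infdist_triangle)+
    moreover have "dist (a z0) (a z) = dist (a z) (a z0)"
      and "(\<Sum>i\<in>I. dist (b i z0) (b i z)) = (\<Sum>i\<in>I. dist (b i z) (b i z0))"
      by (simp_all only: dist_commute)
    ultimately show ?thesis
      unfolding dist_real_def abs_le_iff by linarith
  qed
  have "eventually (\<lambda>z. norm (dist (?h z) (?h z0)) \<le> ?g z) (at z0 within S)"
    using bound by (simp add: always_eventually)
  moreover have "(?g \<longlongrightarrow> 0) (at z0 within S)"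
    using a b z0 unfolding continuous_on_def
    by (auto intro!: tendsto_eq_intros)
  ultimately have "((\<lambda>z. dist (?h z) (?h z0)) \<longlongrightarrow> 0) (at z0 within S)"
    by (rule Lim_null_comparison)
  then show "(?h \<longlongrightarrow> ?h z0) (at z0 within S)"
    by (rule tendsto_dist_iff[THEN iffD2])
qed

definition target_dist ::
    "(real \<Rightarrow> real \<Rightarrow> real^'n^'n) \<Rightarrow> real \<Rightarrow> ('i \<Rightarrow> real \<Rightarrow> real^'n) \<Rightarrow> 'i set \<Rightarrow> real \<Rightarrow> real^'n \<Rightarrow> real" where
  "target_dist Phi T \<xi> I t x = (INF y\<in>convex hull ((\<lambda>i. \<xi> i t) ` I). norm (Phi T t *v (x - y)))"

lemma target_dist_eq_infdist:
  assumes "I \<noteq> {}"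
  shows "target_dist Phi T \<xi> I t x = infdist (Phi T t *v x) (convex hull ((\<lambda>i. Phi T t *v \<xi> i t) ` I))"
proof -
  have "convex hull ((\<lambda>i. Phi T t *v \<xi> i t) ` I) = (*v) (Phi T t) ` (convex hull ((\<lambda>i. \<xi> i t) ` I))"
    by (simp add: convex_hull_linear_image image_image)
  then show ?thesis
    using assms
    by (simp add: target_dist_def infdist_notempty image_image dist_norm matrix_vector_mult_diff_distrib)
qed

lemma continuous_on_target_dist:
  assumes A: "continuous_on {0..T} A" and Phi: "state_transition A T Phi" and T: "0 \<le> T"
    and I: "finite I" "I \<noteq> {}" and \<xi>: "\<forall>i\<in>I. continuous_on {0..T} (\<xi> i)"
  shows "continuous_on ({0..T} \<times> UNIV) (\<lambda>z. target_dist Phi T \<xi> I (fst z) (snd z))"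
proof -
  have fst: "fst ` ({0..T} \<times> UNIV) \<subseteq> {0..T}"
    by auto
  have PhiT: "continuous_on ({0..T} \<times> UNIV) (\<lambda>z. Phi T (fst z))"
    using continuous_on_state_transition_initial[OF A Phi] T
    by (intro continuous_on_compose2[OF _ continuous_on_fst[OF continuous_on_id] fst]) auto
  have "continuous_on ({0..T} \<times> UNIV) (\<lambda>z. \<xi> i (fst z))" if "i \<in> I" for i
    using \<xi> that by (intro continuous_on_compose2[OF _ continuous_on_fst[OF continuous_on_id] fst]) auto
  then show ?thesis
    unfolding target_dist_eq_infdist[OF I(2)]
    using PhiT by (intro continuous_on_infdist_convex_hull_image I ballI continuous_on_snd
        bounded_bilinear.continuous_on[OF bounded_bilinear_matrix_vector_mult]) auto
qed

lemma target_dist_le: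
  "y \<in> convex hull ((\<lambda>i. \<xi> i t) ` I) \<Longrightarrow> target_dist Phi T \<xi> I t x \<le> norm (Phi T t *v (x - y))"
  unfolding target_dist_def by (intro cINF_lower bdd_belowI[of _ 0]) auto

lemma target_dist_attained:
  assumes I: "finite I" "I \<noteq> {}"
  obtains y where "y \<in> convex hull ((\<lambda>i. \<xi> i t) ` I)" "target_dist Phi T \<xi> I t x = norm (Phi T t *v (x - y))"
proof -
  let ?H = "convex hull ((\<lambda>i. \<xi> i t) ` I)"
  have H: "compact ?H" "?H \<noteq> {}"
    using I by (auto intro: finite_imp_compact_convex_hull)
  have "continuous_on ?H (\<lambda>y. norm (Phi T t *v (x - y)))"
    by (intro continuous_on_norm bounded_linear.continuous_on[OF matrix_vector_mul_bounded_linear]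
        continuous_on_diff continuous_on_const continuous_on_id)
  then obtain y where y: "y \<in> ?H" "\<And>y'. y' \<in> ?H \<Longrightarrow> norm (Phi T t *v (x - y)) \<le> norm (Phi T t *v (x - y'))"
    using continuous_attains_inf[OF H] by blast
  have "norm (Phi T t *v (x - y)) \<le> target_dist Phi T \<xi> I t x"
    unfolding target_dist_def using H(2) y(2) by (rule cINF_greatest)
  moreover have "target_dist Phi T \<xi> I t x \<le> norm (Phi T t *v (x - y))"
    using y(1) by (rule target_dist_le)
  ultimately show thesis
    using that[OF y(1)] by simp
qed

lemma target_dist_nonincreasing_trajectory:
  fixes \<xi> \<omega> :: "'i \<Rightarrow> real \<Rightarrow> real^'n"
  assumes A: "continuous_on {0..T} A" and Phi: "state_transition A T Phi"
    and I: "finite I" "I \<noteq> {}" and t0: "t0 \<in> {0..T}"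
    and sol: "\<forall>i\<in>I. integral_solution A (\<omega> i) (\<xi> i) t0 T"
    and ctrl: "\<forall>i\<in>I. \<forall>r\<in>{t0..T}. \<omega> i r \<in> W r" and W: "\<forall>r\<in>{t0..T}. convex (W r)"
  obtains x w where "x t0 = x0" "integral_solution A w x t0 T" "\<forall>r\<in>{t0..T}. w r \<in> W r"
    "\<forall>s\<in>{t0..T}. target_dist Phi T \<xi> I s (x s) \<le> target_dist Phi T \<xi> I t0 x0"
proof -
  obtain y0 where y0: "y0 \<in> convex hull ((\<lambda>i. \<xi> i t0) ` I)"
    "target_dist Phi T \<xi> I t0 x0 = norm (Phi T t0 *v (x0 - y0))"
    using target_dist_attained[OF I] by blast
  obtain u where u: "\<forall>i\<in>I. 0 \<le> u i" "sum u I = 1" "y0 = (\<Sum>i\<in>I. u i *\<^sub>R \<xi> i t0)"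
    using convex_hull_finite_imageE[OF I(1) y0(1)] by blast
  \<comment> \<open>Follow the convex combination \<open>y\<close> of the \<open>\<xi> i\<close>, shifted by a free solution that keeps \<open>\<Phi>(T,s)(x s - y s)\<close> constant.\<close>
  define y where "y s = (\<Sum>i\<in>I. u i *\<^sub>R \<xi> i s)" for s
  define x where "x s = y s + Phi s t0 *v (x0 - y0)" for s
  define w where "w r = (\<Sum>i\<in>I. u i *\<^sub>R \<omega> i r)" for r
  show thesis
  proof (rule that)
    show "x t0 = x0"
      using Phi t0 u(3) by (simp add: x_def y_def state_transition_def)
    show "integral_solution A w x t0 T"
      unfolding x_def y_def w_def
      by (rule integral_solution_add_homogeneous[OF integral_solution_sum[OF I(1) sol]
            integral_solution_state_transition[OF Phi t0]])
    show "\<forall>r\<in>{t0..T}. w r \<in> W r"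
      using u ctrl W I(1) unfolding w_def by (auto intro!: convex_sum)
    show "\<forall>s\<in>{t0..T}. target_dist Phi T \<xi> I s (x s) \<le> target_dist Phi T \<xi> I t0 x0"
    proof
      fix s assume s: "s \<in> {t0..T}"
      have "y s \<in> convex hull ((\<lambda>i. \<xi> i s) ` I)"
        using u I(1) unfolding y_def by (intro convex_sum) (auto intro: hull_inc)
      then have "target_dist Phi T \<xi> I s (x s) \<le> norm (Phi T s *v (x s - y s))"
        by (rule target_dist_le)
      also have "Phi T s *v (x s - y s) = Phi T t0 *v (x0 - y0)"
        using state_transition_cocycle[OF A Phi _ _ t0, of T s] s t0
        by (simp add: x_def matrix_vector_mul_assoc)
      finally show "target_dist Phi T \<xi> I s (x s) \<le> target_dist Phi T \<xi> I t0 x0"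
        using y0(2) by simp
    qed
  qed
qed

lemma continuous_on_Min_image:
  fixes f :: "'k \<Rightarrow> 'a::topological_space \<Rightarrow> real"
  assumes "finite K" "K \<noteq> {}" "\<forall>k\<in>K. continuous_on S (f k)"
  shows "continuous_on S (\<lambda>z. Min ((\<lambda>k. f k z) ` K))"
  using assms
proof (induction K rule: finite_ne_induct)
  case (insert k K)
  then show ?case
    by (simp add: continuous_on_min)
qed simp

lemma continuous_on_Min_target_dist:
  fixes \<xi> :: "'k \<Rightarrow> 'i \<Rightarrow> real \<Rightarrow> real^'n"
  assumes A: "continuous_on {0..T} A" and Phi: "state_transition A T Phi" and T: "0 \<le> T"
    and K: "finite K" "K \<noteq> {}" and I: "\<forall>k\<in>K. finite (I k) \<and> I k \<noteq> {}"
    and \<xi>: "\<forall>k\<in>K. \<forall>i\<in>I k. continuous_on {0..T} (\<xi> k i)"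
  shows "continuous_on ({0..T} \<times> UNIV)
    (\<lambda>z. Min ((\<lambda>k. L * target_dist Phi T (\<xi> k) (I k) (fst z) (snd z) + \<gamma> k) ` K))"
  using I \<xi> by (intro continuous_on_Min_image K ballI continuous_on_add continuous_on_mult_left
      continuous_on_const continuous_on_target_dist[OF A Phi T]) auto

lemma Min_target_dist_nonincreasing_trajectory:
  fixes \<xi> \<omega> :: "'k \<Rightarrow> 'i \<Rightarrow> real \<Rightarrow> real^'n"
  assumes A: "continuous_on {0..T} A" and Phi: "state_transition A T Phi"
    and K: "finite K" "K \<noteq> {}" and L: "L \<ge> 0"
    and I: "\<forall>k\<in>K. finite (I k) \<and> I k \<noteq> {}" and t0: "t0 \<in> {0..T}"
    and sol: "\<forall>k\<in>K. \<forall>i\<in>I k. integral_solution A (\<omega> k i) (\<xi> k i) t0 T"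
    and ctrl: "\<forall>k\<in>K. \<forall>i\<in>I k. \<forall>r\<in>{t0..T}. \<omega> k i r \<in> W r" and W: "\<forall>r\<in>{t0..T}. convex (W r)"
  obtains x w where "x t0 = x0" "integral_solution A w x t0 T" "\<forall>r\<in>{t0..T}. w r \<in> W r"
    "\<forall>s\<in>{t0..T}. Min ((\<lambda>k. L * target_dist Phi T (\<xi> k) (I k) s (x s) + \<gamma> k) ` K)
        \<le> Min ((\<lambda>k. L * target_dist Phi T (\<xi> k) (I k) t0 x0 + \<gamma> k) ` K)"
proof -
  let ?F = "\<lambda>k t y. L * target_dist Phi T (\<xi> k) (I k) t y + \<gamma> k"
  have "Min ((\<lambda>k. ?F k t0 x0) ` K) \<in> (\<lambda>k. ?F k t0 x0) ` K"
    using K by (intro Min_in) auto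
  then obtain k where k: "k \<in> K" "Min ((\<lambda>k. ?F k t0 x0) ` K) = ?F k t0 x0"
    by blast
  have Ik: "finite (I k)" "I k \<noteq> {}" and solk: "\<forall>i\<in>I k. integral_solution A (\<omega> k i) (\<xi> k i) t0 T"
    and ctrlk: "\<forall>i\<in>I k. \<forall>r\<in>{t0..T}. \<omega> k i r \<in> W r"
    using I sol ctrl k(1) by auto
  obtain x w where x: "x t0 = x0" "integral_solution A w x t0 T" "\<forall>r\<in>{t0..T}. w r \<in> W r"
    "\<forall>s\<in>{t0..T}. target_dist Phi T (\<xi> k) (I k) s (x s) \<le> target_dist Phi T (\<xi> k) (I k) t0 x0"
    by (rule target_dist_nonincreasing_trajectory[OF A Phi Ik t0 solk ctrlk W])
  show thesis
  proof (rule that[OF x(1-3)], intro ballI)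
    fix s assume s: "s \<in> {t0..T}"
    have "Min ((\<lambda>k. ?F k s (x s)) ` K) \<le> ?F k s (x s)"
      using K k(1) by (intro Min_le) auto
    also have "\<dots> \<le> ?F k t0 x0"
      using x(4) s L by (simp add: mult_left_mono)
    finally show "Min ((\<lambda>k. ?F k s (x s)) ` K) \<le> Min ((\<lambda>k. ?F k t0 x0) ` K)"
      using k(2) by simp
  qed
qed

section \<open>Control sets and the Hamiltonian\<close>

lemma convex_mink_diff:
  assumes Y: "convex Y"
  shows "convex (mink_diff Y Z)"
proof (rule convexI)
  fix c1 c2 assume c: "c1 \<in> mink_diff Y Z" "c2 \<in> mink_diff Y Z"
  fix u v :: real assume uv: "0 \<le> u" "0 \<le> v" "u + v = 1"
  show "u *\<^sub>R c1 + v *\<^sub>R c2 \<in> mink_diff Y Z"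
    unfolding mink_diff_def
  proof (rule CollectI, rule image_subsetI)
    fix z assume z: "z \<in> Z"
    have "c1 + z \<in> Y" "c2 + z \<in> Y"
      using c z unfolding mink_diff_def by auto
    then have "u *\<^sub>R (c1 + z) + v *\<^sub>R (c2 + z) \<in> Y"
      by (rule convexD[OF Y _ _ uv])
    moreover have "u *\<^sub>R (c1 + z) + v *\<^sub>R (c2 + z) = u *\<^sub>R c1 + v *\<^sub>R c2 + z"
      using uv(3) by (simp add: algebra_simps flip: scaleR_add_left)
    ultimately show "u *\<^sub>R c1 + v *\<^sub>R c2 + z \<in> Y"
      by simp
  qed
qed

lemma convex_Wset: "convex U \<Longrightarrow> convex (Wset B E U D t)"
  unfolding Wset_def by (intro convex_mink_diff convex_linear_image) simp

lemma Wset_subset_range: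
  assumes "d0 \<in> D"
  shows "Wset B E U D t \<subseteq> (\<lambda>u. B t *v u + E t *v d0) ` U"
proof
  fix w assume "w \<in> Wset B E U D t"
  then have "w + - (E t *v d0) \<in> (\<lambda>u. B t *v u) ` U"
    using assms unfolding Wset_def mink_diff_def by blast
  then show "w \<in> (\<lambda>u. B t *v u + E t *v d0) ` U"
    by (force simp: algebra_simps)
qed

lemma Wset_inner_leE:
  assumes D: "compact D" "D \<noteq> {}" and w: "w \<in> Wset B E U D t"
  obtains u where "u \<in> U" "\<And>d. d \<in> D \<Longrightarrow> a \<bullet> w \<le> a \<bullet> (B t *v u + E t *v d)"
proof -
  have "continuous_on D (\<lambda>d. a \<bullet> (E t *v d))"
    by (intro continuous_on_inner continuous_on_const
        bounded_linear.continuous_on[OF matrix_vector_mul_bounded_linear] continuous_on_id)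
  then obtain d0 where d0: "d0 \<in> D" "\<And>d. d \<in> D \<Longrightarrow> a \<bullet> (E t *v d0) \<le> a \<bullet> (E t *v d)"
    using continuous_attains_inf[OF D] by blast
  obtain u where u: "u \<in> U" "w = B t *v u + E t *v d0"
    using Wset_subset_range[OF d0(1)] w by blast
  show thesis
  proof (rule that[OF u(1)])
    fix d assume "d \<in> D"
    then show "a \<bullet> w \<le> a \<bullet> (B t *v u + E t *v d)"
      using d0(2) u(2) by (simp add: inner_add_right)
  qed
qed

lemma le_hamiltonian:
  fixes A :: "real \<Rightarrow> real^'n^'n" and B :: "real \<Rightarrow> real^'m^'n" and E :: "real \<Rightarrow> real^'l^'n"
  assumes U: "compact U" and D: "compact D" "D \<noteq> {}" and u: "u \<in> U"
    and c: "\<And>d. d \<in> D \<Longrightarrow> c \<le> (- p) \<bullet> (A t *v x + B t *v u + E t *v d)"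
  shows "c \<le> hamiltonian A B E U D t x p"
proof -
  let ?F = "\<lambda>u d. (- p) \<bullet> (A t *v x + B t *v u + E t *v d)"
  have cont: "continuous_on S (\<lambda>z. (- p) \<bullet> (A t *v x + B t *v f z + E t *v g z))"
    if "continuous_on S f" "continuous_on S g" for S and f :: "'z::topological_space \<Rightarrow> real^'m" and g :: "'z \<Rightarrow> real^'l"
    using that by (intro continuous_intros) auto
  have bdd_below: "bdd_below (?F u' ` D)" for u'
    using cont[OF continuous_on_const continuous_on_id, of D u'] D(1)
    by (intro bounded_imp_bdd_below compact_imp_bounded compact_continuous_image)
  obtain d0 where d0: "d0 \<in> D"
    using D(2) by blast
  have "bdd_above ((\<lambda>u'. ?F u' d0) ` U)"
    using cont[OF continuous_on_id continuous_on_const, of U d0] U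
    by (intro bounded_imp_bdd_above compact_imp_bounded compact_continuous_image)
  then obtain M where M: "\<And>u'. u' \<in> U \<Longrightarrow> ?F u' d0 \<le> M"
    by (auto simp: bdd_above_def)
  have bdd_above: "bdd_above ((\<lambda>u'. INF d\<in>D. ?F u' d) ` U)"
    by (rule bdd_aboveI2[of _ _ M]) (rule order_trans[OF cINF_lower[OF bdd_below d0] M])
  have "c \<le> (INF d\<in>D. ?F u d)"
    using D(2) c by (rule cINF_greatest)
  also have "\<dots> \<le> (SUP u'\<in>U. INF d\<in>D. ?F u' d)"
    by (rule cSUP_upper[OF u bdd_above])
  finally show ?thesis
    unfolding hamiltonian_def .
qed

lemma bounded_UN_Wset:
  assumes S: "compact S" and B: "continuous_on S B" and E: "continuous_on S E"
    and U: "compact U" and D: "D \<noteq> {}"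
  shows "bounded (\<Union>t\<in>S. Wset B E U D t)"
proof -
  obtain d0 where d0: "d0 \<in> D"
    using D by blast
  have "continuous_on (S \<times> U) (\<lambda>z. B (fst z) *v snd z + E (fst z) *v d0)"
    using B E by (intro continuous_intros continuous_on_compose2[OF B] continuous_on_compose2[OF E]) auto
  then have "bounded ((\<lambda>z. B (fst z) *v snd z + E (fst z) *v d0) ` (S \<times> U))"
    using S U by (intro compact_imp_bounded compact_continuous_image compact_Times)
  moreover have "(\<Union>t\<in>S. Wset B E U D t) \<subseteq> (\<lambda>z. B (fst z) *v snd z + E (fst z) *v d0) ` (S \<times> U)"
  proof (intro UN_least subsetI)
    fix t w assume t: "t \<in> S" and "w \<in> Wset B E U D t"
    then obtain u where "u \<in> U" "w = B t *v u + E t *v d0"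
      using Wset_subset_range[OF d0] by blast
    then show "w \<in> (\<lambda>z. B (fst z) *v snd z + E (fst z) *v d0) ` (S \<times> U)"
      using t by (auto intro!: image_eqI[of _ _ "(t, u)"])
  qed
  ultimately show ?thesis
    by (rule bounded_subset)
qed

lemma inner_matrix_vector_mult_add_le:
  fixes M :: "real^'m^'n" and N :: "real^'l^'n"
  shows "a \<bullet> (M *v u + N *v d) \<le> norm a * (norm M * norm u + norm N * norm d)"
proof -
  have "a \<bullet> (M *v u + N *v d) \<le> norm a * norm (M *v u + N *v d)"
    by (rule norm_cauchy_schwarz)
  also have "\<dots> \<le> norm a * (norm M * norm u + norm N * norm d)"
    by (intro mult_left_mono order_trans[OF norm_triangle_ineq] add_mono norm_matrix_vector_mult_le) auto
  finally show ?thesis .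
qed

lemma eventually_inner_le_hamiltonian:
  fixes A :: "real \<Rightarrow> real^'n^'n" and B :: "real \<Rightarrow> real^'m^'n" and E :: "real \<Rightarrow> real^'l^'n"
  assumes B: "continuous_on S B" and E: "continuous_on S E" and U: "compact U" and D: "compact D" "D \<noteq> {}"
    and t0: "t0 \<in> S" and Ax: "((\<lambda>r. A r *v x r) \<longlongrightarrow> A t0 *v x t0) (at t0 within S)"
    and w: "\<forall>r\<in>S. w r \<in> Wset B E U D r" and e: "e > 0"
  shows "eventually (\<lambda>r. (- p) \<bullet> (A r *v x r + w r) \<le> hamiltonian A B E U D t0 (x t0) p + e)
    (at t0 within S)"
proof -
  obtain RU RD where RU: "\<And>u. u \<in> U \<Longrightarrow> norm u \<le> RU" and RD: "\<And>d. d \<in> D \<Longrightarrow> norm d \<le> RD"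
    using compact_imp_bounded[OF U] compact_imp_bounded[OF D(1)] unfolding bounded_iff by metis
  define g where "g r = norm p * (norm (B r - B t0) * RU + norm (E r - E t0) * RD)" for r
  have "(g \<longlongrightarrow> norm p * (norm (B t0 - B t0) * RU + norm (E t0 - E t0) * RD)) (at t0 within S)"
    unfolding g_def using B E t0 unfolding continuous_on_def by (intro tendsto_intros) auto
  then have "eventually (\<lambda>r. g r < e / 2) (at t0 within S)"
    using e by (intro order_tendstoD(2)) auto
  moreover have "eventually (\<lambda>r. (- p) \<bullet> (A r *v x r) < (- p) \<bullet> (A t0 *v x t0) + e / 2) (at t0 within S)"
    using e by (intro order_tendstoD(2)[OF tendsto_inner[OF tendsto_const Ax]]) simp
  moreover have "eventually (\<lambda>r. r \<in> S) (at t0 within S)"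
    by (simp add: eventually_at_filter)
  ultimately show ?thesis
  proof eventually_elim
    case (elim r)
    then obtain u where u: "u \<in> U" "\<And>d. d \<in> D \<Longrightarrow> (- p) \<bullet> w r \<le> (- p) \<bullet> (B r *v u + E r *v d)"
      using Wset_inner_leE[OF D] w by metis
    have "(- p) \<bullet> (A r *v x r + w r) - e \<le> (- p) \<bullet> (A t0 *v x t0 + B t0 *v u + E t0 *v d)"
      if d: "d \<in> D" for d
    proof -
      have "(- p) \<bullet> ((B r - B t0) *v u + (E r - E t0) *v d)
          \<le> norm p * (norm (B r - B t0) * norm u + norm (E r - E t0) * norm d)"
        using inner_matrix_vector_mult_add_le[of "- p"] by simp
      also have "\<dots> \<le> g r"
        unfolding g_def using RU[OF u(1)] RD[OF d] by (intro mult_left_mono add_mono) auto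
      finally show ?thesis
        using elim u(2)[OF d]
        by (simp add: inner_add_right matrix_vector_mult_diff_rdistrib inner_diff_right)
    qed
    then have "(- p) \<bullet> (A r *v x r + w r) - e \<le> hamiltonian A B E U D t0 (x t0) p"
      by (rule le_hamiltonian[OF U D u(1)])
    then show ?case
      by simp
  qed
qed

section \<open>Supersolutions from nonincreasing trajectories\<close>

lemma has_integral_le_const_right:
  fixes f :: "real \<Rightarrow> real"
  assumes f: "(f has_integral i) {a..b}" and ab: "a \<le> b" and le: "\<And>r. r \<in> {a<..b} \<Longrightarrow> f r \<le> c"
  shows "i \<le> c * (b - a)"
proof -
  have "((\<lambda>r. if r = a then c else f r) has_integral i) {a..b}"
    by (rule has_integral_spike[OF negligible_sing[of a] _ f]) simp
  moreover have "((\<lambda>r. c) has_integral c * (b - a)) {a..b}"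
    using has_integral_const_real[of c a b] ab by (simp add: mult.commute)
  ultimately show ?thesis
    by (rule has_integral_le) (use le in auto)
qed

lemma subdiff_time_le_of_descent:
  fixes v :: "real \<Rightarrow> 'a::real_inner \<Rightarrow> real" and x f :: "real \<Rightarrow> 'a"
  assumes qp: "(q, p) \<in> subdiff v t0 (x t0)" and T: "t0 < T"
    and x: "\<forall>s\<in>{t0..T}. (f has_integral (x s - x t0)) {t0..s}"
    and f_bdd: "bounded (f ` {t0..T})"
    and descent: "\<forall>s\<in>{t0..T}. v s (x s) \<le> v t0 (x t0)"
    and f_le: "\<forall>e>0. eventually (\<lambda>r. (- p) \<bullet> f r \<le> h + e) (at t0 within {t0..T})"
  shows "q \<le> h"
proof (rule field_le_epsilon)
  fix e :: real assume e: "e > 0"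
  obtain C where C: "C > 0" "\<And>r. r \<in> {t0..T} \<Longrightarrow> norm (f r) \<le> C"
    using f_bdd unfolding bounded_pos by auto
  define \<epsilon> where "\<epsilon> = e / (2 * (1 + C))"
  have \<epsilon>: "\<epsilon> > 0"
    using e C by (simp add: \<epsilon>_def)
  obtain \<delta>1 where \<delta>1: "\<delta>1 > 0" "\<And>t y. 0 < norm ((t, y) - (t0, x t0)) \<Longrightarrow> norm ((t, y) - (t0, x t0)) < \<delta>1 \<Longrightarrow>
      v t y - v t0 (x t0) - (q * (t - t0) + p \<bullet> (y - x t0)) \<ge> - \<epsilon> * norm ((t, y) - (t0, x t0))"
    using qp \<epsilon> unfolding subdiff_def by blast
  obtain \<delta>2 where \<delta>2: "\<delta>2 > 0" "\<And>r. r \<in> {t0..T} \<Longrightarrow> r \<noteq> t0 \<Longrightarrow> dist r t0 < \<delta>2 \<Longrightarrow> (- p) \<bullet> f r \<le> h + e / 2"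
    using f_le e unfolding eventually_at by (metis half_gt_zero)
  define \<tau> where "\<tau> = min (\<delta>1 / (2 * (1 + C))) (min (\<delta>2 / 2) (T - t0))"
  have \<tau>_le: "\<tau> \<le> \<delta>1 / (2 * (1 + C))" "\<tau> \<le> \<delta>2 / 2" "\<tau> \<le> T - t0"
    unfolding \<tau>_def by linarith+
  have "(1 + C) * \<tau> \<le> \<delta>1 / 2"
    using \<tau>_le(1) C(1) by (simp add: field_simps)
  then have \<tau>: "0 < \<tau>" "\<tau> < \<delta>2" "\<tau> \<le> T - t0" "(1 + C) * \<tau> < \<delta>1"
    using \<tau>_le \<delta>1(1) \<delta>2(1) C(1) T by (auto simp: \<tau>_def)
  define s where "s = t0 + \<tau>"
  have s: "s \<in> {t0..T}" and int: "(f has_integral (x s - x t0)) {t0..s}"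
    using \<tau> x by (auto simp: s_def)
  have "((\<lambda>r. (- p) \<bullet> f r) has_integral (- p) \<bullet> (x s - x t0)) {t0..s}"
    using has_integral_linear[OF int bounded_linear_inner_right[of "- p"]] by (simp add: o_def)
  then have "(- p) \<bullet> (x s - x t0) \<le> (h + e / 2) * (s - t0)"
  proof (rule has_integral_le_const_right)
    fix r assume "r \<in> {t0<..s}"
    then show "(- p) \<bullet> f r \<le> h + e / 2"
      using \<delta>2(2)[of r] s \<tau> by (auto simp: s_def dist_real_def)
  qed (use s in simp)
  then have move: "(- p) \<bullet> (x s - x t0) \<le> (h + e / 2) * \<tau>"
    by (simp add: s_def)
  have "norm (x s - x t0) \<le> C * \<tau>"
    using has_integral_bound[of C f _ t0 s] int C s by (auto simp: s_def)
  define N where "N = norm ((s, x s) - (t0, x t0))"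
  have N: "\<tau> \<le> N" "N \<le> (1 + C) * \<tau>"
    using norm_fst_le[of \<tau> "x s - x t0"] norm_Pair_le[of \<tau> "x s - x t0"] \<tau>(1) \<open>norm (x s - x t0) \<le> C * \<tau>\<close>
    by (auto simp: N_def s_def algebra_simps)
  have "- \<epsilon> * N \<le> v s (x s) - v t0 (x t0) - (q * \<tau> + p \<bullet> (x s - x t0))"
    using \<delta>1(2)[of s "x s"] N \<tau> by (auto simp: N_def s_def zero_prod_def)
  moreover have "\<epsilon> * N \<le> e / 2 * \<tau>"
  proof -
    have "\<epsilon> * N \<le> \<epsilon> * ((1 + C) * \<tau>)"
      using N(2) \<epsilon> by (intro mult_left_mono) auto
    also have "\<dots> = e / 2 * \<tau>"
      using C(1) by (simp add: \<epsilon>_def field_simps)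
    finally show ?thesis .
  qed
  moreover have "v s (x s) \<le> v t0 (x t0)"
    using descent s by blast
  ultimately have "q * \<tau> \<le> (h + e) * \<tau>"
    using move by (simp add: algebra_simps)
  then show "q \<le> h + e"
    using \<tau>(1) by simp
qed

lemma visc_supersolution_of_descent:
  fixes A :: "real \<Rightarrow> real^'n^'n" and B :: "real \<Rightarrow> real^'m^'n" and E :: "real \<Rightarrow> real^'l^'n"
  assumes A: "continuous_on {0..T} A" and B: "continuous_on {0..T} B" and E: "continuous_on {0..T} E"
    and U: "compact U" and D: "compact D" "D \<noteq> {}"
    and descent: "\<And>t0 x0. 0 < t0 \<Longrightarrow> t0 < T \<Longrightarrow> \<exists>x w. x t0 = x0 \<and> integral_solution A w x t0 T
      \<and> (\<forall>r\<in>{t0..T}. w r \<in> Wset B E U D r) \<and> (\<forall>s\<in>{t0..T}. v s (x s) \<le> v t0 x0)"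
  shows "visc_supersolution T (hamiltonian A B E U D) v"
  unfolding visc_supersolution_def
proof (intro allI impI, elim conjE)
  fix t0 x0 q p assume t0: "0 < t0" "t0 < T" and qp: "(q, p) \<in> subdiff v t0 x0"
  obtain x w where x: "x t0 = x0" "integral_solution A w x t0 T"
    and w: "\<forall>r\<in>{t0..T}. w r \<in> Wset B E U D r" and v: "\<forall>s\<in>{t0..T}. v s (x s) \<le> v t0 x0"
    using descent[OF t0] by blast
  have sub: "{t0..T} \<subseteq> {0..T}"
    using t0 by auto
  have Ax: "continuous_on {t0..T} (\<lambda>r. A r *v x r)"
    using continuous_on_subset[OF A sub] integral_solution_continuous[OF x(2)]
    by (rule bounded_bilinear.continuous_on[OF bounded_bilinear_matrix_vector_mult])
  have "q \<le> hamiltonian A B E U D t0 (x t0) p"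
  proof (rule subdiff_time_le_of_descent[of q p v t0 x])
    show "\<forall>s\<in>{t0..T}. ((\<lambda>r. A r *v x r + w r) has_integral (x s - x t0)) {t0..s}"
      using x(2) unfolding integral_solution_def .
    have "bounded (w ` {t0..T})"
      using w by (intro bounded_subset[OF bounded_UN_Wset[OF compact_Icc
            continuous_on_subset[OF B sub] continuous_on_subset[OF E sub] U D(2)]]) blast
    then show "bounded ((\<lambda>r. A r *v x r + w r) ` {t0..T})"
      using compact_imp_bounded[OF compact_continuous_image[OF Ax compact_Icc]]
      by (intro bounded_plus_comp)
    show "\<forall>e>0. eventually (\<lambda>r. (- p) \<bullet> (A r *v x r + w r) \<le> hamiltonian A B E U D t0 (x t0) p + e)
        (at t0 within {t0..T})"
      using Ax t0 unfolding continuous_on_def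
      by (intro allI impI eventually_inner_le_hamiltonian[OF continuous_on_subset[OF B sub]
            continuous_on_subset[OF E sub] U D _ _ w]) auto
  qed (use qp x(1) v t0 in auto)
  then show "0 \<le> - q + hamiltonian A B E U D t0 x0 p"
    using x(1) by simp
qed

theorem lemma2:
  fixes T :: real
    and A :: "real \<Rightarrow> real^'n^'n" and B :: "real \<Rightarrow> real^'m^'n" and E :: "real \<Rightarrow> real^'l^'n"
    and U :: "(real^'m) set" and D :: "(real^'l) set"
    and Phi :: "real \<Rightarrow> real \<Rightarrow> real^'n^'n"
    and g :: "real^'n \<Rightarrow> real" and Lg :: real and N :: nat
    and \<gamma> :: "nat \<Rightarrow> real" and nk :: "nat \<Rightarrow> nat"
    and xbar :: "nat \<Rightarrow> nat \<Rightarrow> real^'n"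
    and \<omega> :: "nat \<Rightarrow> nat \<Rightarrow> real \<Rightarrow> real^'n"
    and \<xi> :: "nat \<Rightarrow> nat \<Rightarrow> real \<Rightarrow> real^'n"
    and v :: "real \<Rightarrow> real^'n \<Rightarrow> real"
  assumes T_pos: "T > 0"
    and A_cont: "continuous_on {0..T} A" and B_cont: "continuous_on {0..T} B"
    and E_cont: "continuous_on {0..T} E"
    and U: "compact U" "convex U" "U \<noteq> {}"
    and D: "compact D" "convex D" "D \<noteq> {}"
    and Phi: "state_transition A T Phi"
    and W_ne: "\<forall>t\<in>{0..T}. Wset B E U D t \<noteq> {}"
    and g_cont: "continuous_on UNIV g" and Lg: "Lg \<ge> 0"
    and N: "N \<ge> 1"
    and gamma: "\<forall>k\<in>{1..N}. \<gamma> k \<in> range g"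
    and nk: "\<forall>k\<in>{1..N}. nk k \<ge> 1"
    and xbar: "\<forall>k\<in>{1..N}. \<forall>i\<in>{1..nk k}. g (xbar i k) = \<gamma> k"
    and omega: "\<forall>k\<in>{1..N}. \<forall>i\<in>{1..nk k}. admissible (Wset B E U D) 0 T (\<omega> i k)"
    and xi: "\<forall>k\<in>{1..N}. \<forall>i\<in>{1..nk k}. \<forall>t\<in>{0..T}.
               ((\<lambda>s. A s *v \<xi> i k s + \<omega> i k s) has_integral (xbar i k - \<xi> i k t)) {t..T}"
    and v_def: "\<And>t x. v t x = Min ((\<lambda>k. Lg * (INF y\<in>convex hull ((\<lambda>i. \<xi> i k t) ` {1..nk k}).
                                          norm (Phi T t *v (x - y))) + \<gamma> k) ` {1..N})"
  shows "continuous_on ({0..T} \<times> UNIV) (\<lambda>(t, x). v t x)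
         \<and> visc_supersolution T (hamiltonian A B E U D) v"
proof -
  let ?F = "\<lambda>k t x. Lg * target_dist Phi T (\<lambda>i. \<xi> i k) {1..nk k} t x + \<gamma> k"
  have v: "v t x = Min ((\<lambda>k. ?F k t x) ` {1..N})" for t x
    by (simp add: v_def target_dist_def)
  have K: "finite {1..N}" "{1..N} \<noteq> {}" and I: "\<forall>k\<in>{1..N}. finite {1..nk k} \<and> {1..nk k} \<noteq> {}"
    using N nk by auto
  have sol: "\<forall>k\<in>{1..N}. \<forall>i\<in>{1..nk k}. integral_solution A (\<omega> i k) (\<xi> i k) t0 T" if "0 \<le> t0" for t0
  proof (intro ballI)
    fix k i assume "k \<in> {1..N}" "i \<in> {1..nk k}"
    then show "integral_solution A (\<omega> i k) (\<xi> i k) t0 T"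
      using xi that by (intro integral_solution_of_terminal_value[of 0 T _ _ _ "xbar i k"]) auto
  qed
  have "\<forall>k\<in>{1..N}. \<forall>i\<in>{1..nk k}. continuous_on {0..T} (\<xi> i k)"
    using sol[of 0] integral_solution_continuous by blast
  then have "continuous_on ({0..T} \<times> UNIV) (\<lambda>z. v (fst z) (snd z))"
    unfolding v using T_pos by (intro continuous_on_Min_target_dist[OF A_cont Phi _ K I]) auto
  moreover have "visc_supersolution T (hamiltonian A B E U D) v"
  proof (rule visc_supersolution_of_descent[OF A_cont B_cont E_cont U(1) D(1,3)])
    fix t0 x0 assume t0: "0 < t0" "t0 < T"
    have "\<forall>k\<in>{1..N}. \<forall>i\<in>{1..nk k}. \<forall>r\<in>{t0..T}. \<omega> i k r \<in> Wset B E U D r"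
      using omega t0 unfolding admissible_def by auto
    moreover have "t0 \<in> {0..T}" and "\<forall>r\<in>{t0..T}. convex (Wset B E U D r)"
      using t0 convex_Wset[OF U(2)] by auto
    ultimately obtain x w where "x t0 = x0" "integral_solution A w x t0 T"
      "\<forall>r\<in>{t0..T}. w r \<in> Wset B E U D r"
      "\<forall>s\<in>{t0..T}. Min ((\<lambda>k. ?F k s (x s)) ` {1..N}) \<le> Min ((\<lambda>k. ?F k t0 x0) ` {1..N})"
      using sol[of t0] t0
      by (elim Min_target_dist_nonincreasing_trajectory[OF A_cont Phi K Lg I, rotated -1]) auto
    then show "\<exists>x w. x t0 = x0 \<and> integral_solution A w x t0 T
        \<and> (\<forall>r\<in>{t0..T}. w r \<in> Wset B E U D r) \<and> (\<forall>s\<in>{t0..T}. v s (x s) \<le> v t0 x0)"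
      unfolding v by blast
  qed
  ultimately show ?thesis
    by (simp add: case_prod_beta')
qed

end
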